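(* Let $(X,d)$ be a bounded metric space, $\lambda\ge0$, and $\ell:X\to[0,+\infty)$ lower semicontinuous with $\inf_X\ell=0$. Then the function $v(x):=\ell(x)\,\mathrm{diam}(X)$ is a supersolution of $(\mathcal{G}_\lambda)$. Moreover, $T_\lambda^\infty v$ is the Perron solution of $(\mathcal{G}_\lambda)$.
   Context: $\mathrm{diam}(X)=\sup\{d(x,y):x,y\in X\}$. Global slope: $G[u](x)=\sup_{y\neq x}\frac{(u(x)-u(y))_+}{d(x,y)}$ if $u(x)<+\infty$, $G[u](x)=+\infty$ otherwise. For $(\mathcal{G}_\lambda)$: a supersolution is a lower semicontinuous $v:X\to\mathbb{R}\cup\{+\infty\}$ with $\inf_Xv=0$ and $\lambda v+G[v]\ge\ell$ on $X$; a solution is a lower semicontinuous $u$ with $\inf_Xu=0$ and $\lambda u+G[u]=\ell$ on $X$; the Perron solution is a solution that is pointwise $\ge$ every solution. $T_\lambda u(x)=\inf_{y\in X}\frac{u(y)+\ell(x)d(x,y)}{1+\lambda d(x,y)}$ for $u:X\to[0,+\infty]$, and $T_\lambda^\infty u=\lim_nT_\lambda^nu$ pointwise. *)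

theory Defs
  imports "HOL-Analysis.Analysis"
begin

definition lsc :: "('a::topological_space \<Rightarrow> 'b::linorder) \<Rightarrow> bool" where
  "lsc f \<longleftrightarrow> (\<forall>c. open {x. c < f x})"

text \<open>Global slope; the supremum over the empty set (one-point space) is taken to be 0.\<close>
definition gslope :: "('a::metric_space \<Rightarrow> ereal) \<Rightarrow> 'a \<Rightarrow> ereal" where
  "gslope u x = (if u x < \<infinity>
     then Sup (insert 0 {max 0 (u x - u y) / ereal (dist x y) | y. y \<noteq> x})
     else \<infinity>)"

definition supersol :: "real \<Rightarrow> ('a::metric_space \<Rightarrow> real) \<Rightarrow> ('a \<Rightarrow> ereal) \<Rightarrow> bool" where
  "supersol lam l v \<longleftrightarrow> lsc v \<and> (INF x. v x) = 0 \<and>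
     (\<forall>x. ereal lam * v x + gslope v x \<ge> ereal (l x))"

definition sol :: "real \<Rightarrow> ('a::metric_space \<Rightarrow> real) \<Rightarrow> ('a \<Rightarrow> ereal) \<Rightarrow> bool" where
  "sol lam l u \<longleftrightarrow> lsc u \<and> (INF x. u x) = 0 \<and>
     (\<forall>x. ereal lam * u x + gslope u x = ereal (l x))"

definition perron_sol :: "real \<Rightarrow> ('a::metric_space \<Rightarrow> real) \<Rightarrow> ('a \<Rightarrow> ereal) \<Rightarrow> bool" where
  "perron_sol lam l u \<longleftrightarrow> sol lam l u \<and> (\<forall>w. sol lam l w \<longrightarrow> (\<forall>x. w x \<le> u x))"

definition Top :: "real \<Rightarrow> ('a::metric_space \<Rightarrow> real) \<Rightarrow> ('a \<Rightarrow> ereal) \<Rightarrow> ('a \<Rightarrow> ereal)" where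
  "Top lam l u x = (INF y. (u y + ereal (l x * dist x y)) / ereal (1 + lam * dist x y))"

definition Top_inf :: "real \<Rightarrow> ('a::metric_space \<Rightarrow> real) \<Rightarrow> ('a \<Rightarrow> ereal) \<Rightarrow> ('a \<Rightarrow> ereal)" where
  "Top_inf lam l u x = lim (\<lambda>n. ((Top lam l) ^^ n) u x)"

end

theory Submission
  imports Defs
begin

text \<open>Call a nonnegative real \<open>f\<close> a \<open>T\<^sub>\<lambda>\<close>-subsolution if
  \<open>f(x)(1 + \<lambda> d(x,y)) \<le> f(y) + \<ell>(x) d(x,y)\<close> for all \<open>x, y\<close>, i.e. \<open>f \<le> T\<^sub>\<lambda> f\<close>. For \<open>f\<close> with
  infimum 0 this is equivalent to \<open>\<lambda> f + G[f] \<le> \<ell>\<close>, and it forces lower semicontinuity.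
  As \<open>T\<^sub>\<lambda>\<close> is monotone and \<open>T\<^sub>\<lambda> v \<le> v\<close>, the iterates \<open>T\<^sub>\<lambda>\<^sup>n v\<close> decrease to the largest
  \<open>T\<^sub>\<lambda>\<close>-subsolution \<open>u \<le> v\<close>. Every solution is a \<open>T\<^sub>\<lambda>\<close>-subsolution with infimum 0, hence
  bounded by \<open>\<ell> diam X = v\<close>, hence below \<open>u\<close>. If \<open>\<lambda> u + G[u] < \<ell>\<close> held at some point,
  lower semicontinuity of \<open>\<ell>\<close> would allow raising \<open>u\<close> there by a small cone while keeping
  it a \<open>T\<^sub>\<lambda>\<close>-subsolution below \<open>v\<close>, contradicting maximality.\<close>

lemma gslope_real:
  fixes U :: "'a::metric_space \<Rightarrow> real"
  shows "gslope (\<lambda>z. ereal (U z)) x =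
    Sup (insert 0 {ereal (max 0 (U x - U y) / dist x y) | y. y \<noteq> x})"
proof -
  have "max 0 (ereal (U x) - ereal (U y)) / ereal (dist x y) = ereal (max 0 (U x - U y) / dist x y)"
    if "y \<noteq> x" for y
    using that by (simp add: zero_ereal_def max_def)
  then show ?thesis
    unfolding gslope_def by (simp, metis)
qed

lemma gslope_real_nonneg: "0 \<le> gslope (\<lambda>z. ereal (U z)) x"
  unfolding gslope_real by (rule Sup_upper) blast

lemma gslope_real_ge:
  fixes U :: "'a::metric_space \<Rightarrow> real"
  assumes "y \<noteq> x"
  shows "ereal ((U x - U y) / dist x y) \<le> gslope (\<lambda>z. ereal (U z)) x"
proof -
  have "(U x - U y) / dist x y \<le> max 0 (U x - U y) / dist x y"
    by (intro divide_right_mono) auto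
  also have "ereal \<dots> \<le> gslope (\<lambda>z. ereal (U z)) x"
    unfolding gslope_real by (rule Sup_upper) (use assms in blast)
  finally show ?thesis by simp
qed

lemma gslope_real_le:
  fixes U :: "'a::metric_space \<Rightarrow> real"
  assumes "0 \<le> g" and "\<And>y. U x - U y \<le> g * dist x y"
  shows "gslope (\<lambda>z. ereal (U z)) x \<le> ereal g"
  unfolding gslope_real
proof (rule Sup_least, safe)
  fix y :: 'a assume "y \<noteq> x"
  then have "max 0 (U x - U y) \<le> g * dist x y"
    using assms by simp
  then show "ereal (max 0 (U x - U y) / dist x y) \<le> ereal g"
    using \<open>y \<noteq> x\<close> by (simp add: divide_le_eq)
qed (use assms in simp)

lemma le_gslope_real:
  fixes U :: "'a::metric_space \<Rightarrow> real"
  assumes "\<And>g. 0 \<le> g \<Longrightarrow> (\<And>y. U x - U y \<le> g * dist x y) \<Longrightarrow> c \<le> g"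
  shows "ereal c \<le> gslope (\<lambda>z. ereal (U z)) x"
proof (cases "gslope (\<lambda>z. ereal (U z)) x")
  case (real g)
  have "0 \<le> g"
    using gslope_real_nonneg[of U x] real by simp
  moreover have "U x - U y \<le> g * dist x y" for y
  proof (cases "y = x")
    case False
    then have "(U x - U y) / dist x y \<le> g"
      using gslope_real_ge[OF False, of U] real by simp
    then show ?thesis
      using False by (simp add: divide_le_eq)
  qed (use \<open>0 \<le> g\<close> in simp)
  ultimately show ?thesis
    using assms real by simp
next
  case MInf
  then show ?thesis
    using gslope_real_nonneg[of U x] by simp
qed simp

lemma lsc_ereal:
  fixes f :: "'a::topological_space \<Rightarrow> real"
  assumes "\<And>c. open {x. c < f x}"
  shows "lsc (\<lambda>x. ereal (f x))"
  unfolding lsc_def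
proof
  fix c :: ereal
  show "open {x. c < ereal (f x)}"
    using assms by (cases c) auto
qed

lemma ereal_INF_eq_0I:
  fixes f :: "'a \<Rightarrow> real"
  assumes "\<And>x. 0 \<le> f x" and "\<And>e. 0 < e \<Longrightarrow> \<exists>x. f x < e"
  shows "(INF x. ereal (f x)) = 0"
proof (rule antisym)
  show "(INF x. ereal (f x)) \<le> 0"
  proof (rule ereal_le_epsilon2)
    fix e :: real assume "0 < e"
    then obtain x where "f x < e"
      using assms(2) by blast
    then have "(INF x. ereal (f x)) \<le> ereal e"
      by (intro INF_lower2[of x]) auto
    then show "(INF x. ereal (f x)) \<le> 0 + ereal e" by simp
  qed
qed (use assms(1) in \<open>auto intro: INF_greatest\<close>)

lemma le_of_ereal_INF_eq_0:
  fixes f :: "'a \<Rightarrow> real"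
  assumes "(INF y. ereal (f y)) = 0" and "\<And>y. f x \<le> f y + c"
  shows "f x \<le> c"
proof (rule field_le_epsilon)
  fix e :: real assume "0 < e"
  then obtain y where "ereal (f y) < ereal e"
    using assms(1) by (metis INF_less_iff zero_ereal_def ereal_less(2))
  then show "f x \<le> c + e"
    using assms(2)[of y] by simp
qed

locale slope_operator =
  fixes l :: "'a::metric_space \<Rightarrow> real" and lam :: real
  assumes lam_nonneg: "0 \<le> lam" and l_nonneg: "\<And>x. 0 \<le> l x"
begin

definition T_real :: "('a \<Rightarrow> real) \<Rightarrow> 'a \<Rightarrow> real" where
  "T_real f x = (INF y. (f y + l x * dist x y) / (1 + lam * dist x y))"

lemma denom_pos: "0 < 1 + lam * dist x y"
  using lam_nonneg by (simp add: add_pos_nonneg)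

lemma quotient_nonneg: "0 \<le> f y \<Longrightarrow> 0 \<le> (f y + l x * dist x y) / (1 + lam * dist x y)"
  using l_nonneg[of x] denom_pos[of x y] by simp

lemma T_real_lower:
  assumes "\<And>z. 0 \<le> f z"
  shows "T_real f x \<le> (f y + l x * dist x y) / (1 + lam * dist x y)"
  unfolding T_real_def
proof (rule cINF_lower)
  show "bdd_below (range (\<lambda>y. (f y + l x * dist x y) / (1 + lam * dist x y)))"
    using assms quotient_nonneg by (intro bdd_belowI[of _ 0]) auto
qed simp

lemma T_real_greatest:
  "(\<And>y. c \<le> (f y + l x * dist x y) / (1 + lam * dist x y)) \<Longrightarrow> c \<le> T_real f x"
  unfolding T_real_def by (rule cINF_greatest) auto

lemma T_real_nonneg: "(\<And>z. 0 \<le> f z) \<Longrightarrow> 0 \<le> T_real f x"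
  by (intro T_real_greatest quotient_nonneg)

lemma T_real_le_self: "(\<And>z. 0 \<le> f z) \<Longrightarrow> T_real f x \<le> f x"
  using T_real_lower[of f x x] by simp

lemma T_real_mono:
  assumes "\<And>z. 0 \<le> f z" and "\<And>z. f z \<le> g z"
  shows "T_real f x \<le> T_real g x"
proof (rule T_real_greatest)
  fix y
  have "T_real f x \<le> (f y + l x * dist x y) / (1 + lam * dist x y)"
    by (rule T_real_lower[OF assms(1)])
  also have "\<dots> \<le> (g y + l x * dist x y) / (1 + lam * dist x y)"
    using denom_pos[of x y] assms(2)[of y] by (simp add: divide_right_mono)
  finally show "T_real f x \<le> (g y + l x * dist x y) / (1 + lam * dist x y)" .
qed

lemma Top_ereal:
  assumes "\<And>z. 0 \<le> f z"
  shows "Top lam l (\<lambda>z. ereal (f z)) = (\<lambda>z. ereal (T_real f z))"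
proof
  fix x
  let ?q = "\<lambda>y. (f y + l x * dist x y) / (1 + lam * dist x y)"
  have "(ereal (f y) + ereal (l x * dist x y)) / ereal (1 + lam * dist x y) = ereal (?q y)" for y
    using denom_pos[of x y] by simp
  then have "Top lam l (\<lambda>z. ereal (f z)) x = (INF y. ereal (?q y))"
    unfolding Top_def by simp
  also have "\<dots> = ereal (T_real f x)"
  proof -
    have "bdd_below (range ?q)"
      using assms quotient_nonneg by (intro bdd_belowI[of _ 0]) auto
    then show ?thesis
      unfolding T_real_def using ereal_Inf'[of "range ?q"] by (simp add: image_comp)
  qed
  finally show "Top lam l (\<lambda>z. ereal (f z)) x = ereal (T_real f x)" .
qed

definition T_subsol :: "('a \<Rightarrow> real) \<Rightarrow> bool" where
  "T_subsol f \<longleftrightarrow> (\<forall>x y. f x * (1 + lam * dist x y) \<le> f y + l x * dist x y)"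

lemma T_subsol_le_T_real: "T_subsol f \<Longrightarrow> f x \<le> T_real f x"
  unfolding T_subsol_def using denom_pos[of x] by (intro T_real_greatest) (simp add: pos_le_divide_eq)

lemma T_subsol_lower:
  assumes "T_subsol f" and "0 \<le> f x"
  shows "f x - l x * dist x y \<le> f y"
proof -
  have "f x * (1 + lam * dist x y) \<le> f y + l x * dist x y"
    using assms(1) unfolding T_subsol_def by blast
  moreover have "0 \<le> f x * (lam * dist x y)"
    using assms(2) lam_nonneg by simp
  ultimately show ?thesis by (simp add: algebra_simps)
qed

lemma lsc_T_subsol:
  assumes "T_subsol f" and f_nonneg: "\<And>z. 0 \<le> f z"
  shows "lsc (\<lambda>z. ereal (f z))"
proof (rule lsc_ereal)
  fix c
  show "open {z. c < f z}"
    unfolding open_dist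
  proof safe
    fix x assume "c < f x"
    define r where "r = (f x - c) / (l x + 1)"
    have "0 < l x + 1"
      using l_nonneg[of x] by simp
    then have "0 < r"
      unfolding r_def using \<open>c < f x\<close> by simp
    moreover have "c < f y" if "dist y x < r" for y
    proof -
      have "l x * dist x y < (l x + 1) * r"
        using that \<open>0 < l x + 1\<close> l_nonneg[of x] by (simp add: dist_commute mult_strict_mono')
      also have "\<dots> = f x - c"
        unfolding r_def using \<open>0 < l x + 1\<close> by simp
      finally show ?thesis
        using T_subsol_lower[OF assms(1) f_nonneg, of x y] by simp
    qed
    ultimately show "\<exists>e>0. \<forall>y. dist y x < e \<longrightarrow> y \<in> {z. c < f z}"
      by blast
  qed
qed

lemma T_subsol_sup_cone:
  assumes "T_subsol U" and "0 \<le> k"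
    and cone: "\<And>z. U z < c - k * dist x z \<Longrightarrow> lam * (c - k * dist x z) + k \<le> l z"
  shows "T_subsol (\<lambda>z. max (U z) (c - k * dist x z))"
  unfolding T_subsol_def
proof safe
  fix z y
  define \<phi> where "\<phi> z = c - k * dist x z" for z
  show "max (U z) (\<phi> z) * (1 + lam * dist z y) \<le> max (U y) (\<phi> y) + l z * dist z y"
  proof (cases "U z < \<phi> z")
    case False
    then show ?thesis
      using assms(1) unfolding T_subsol_def by (smt (verit))
  next
    case True
    have "k * dist x y \<le> k * (dist x z + dist z y)"
      using dist_triangle[of x y z] \<open>0 \<le> k\<close> by (intro mult_left_mono) auto
    then have "\<phi> z - k * dist z y \<le> \<phi> y"
      unfolding \<phi>_def by (simp add: algebra_simps)
    have "\<phi> z * (1 + lam * dist z y) = \<phi> z + (lam * \<phi> z) * dist z y"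
      by (simp add: algebra_simps)
    also have "\<dots> \<le> \<phi> z + (l z - k) * dist z y"
      using cone[OF True[unfolded \<phi>_def]] unfolding \<phi>_def by (simp add: mult_right_mono)
    also have "\<dots> = (\<phi> z - k * dist z y) + l z * dist z y"
      by (simp add: algebra_simps)
    also have "\<dots> \<le> max (U y) (\<phi> y) + l z * dist z y"
      using \<open>\<phi> z - k * dist z y \<le> \<phi> y\<close> by simp
    finally show ?thesis
      using True by simp
  qed
qed

lemma T_subsol_slope_le:
  assumes "T_subsol f" and f_nonneg: "\<And>z. 0 \<le> f z" and "(INF z. ereal (f z)) = 0"
  shows "ereal lam * ereal (f x) + gslope (\<lambda>z. ereal (f z)) x \<le> ereal (l x)"
proof -
  have lam_f: "lam * f x \<le> l x"
  proof (cases "f x = 0")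
    case False
    then have "(INF z. ereal (f z)) < ereal (f x)"
      using f_nonneg[of x] assms(3) by simp
    then obtain y where "f y < f x"
      by (auto simp: INF_less_iff)
    then have "0 < dist x y"
      by auto
    have "f x * (1 + lam * dist x y) \<le> f y + l x * dist x y"
      using assms(1) unfolding T_subsol_def by blast
    then have "(lam * f x) * dist x y < l x * dist x y"
      using \<open>f y < f x\<close> by (simp add: algebra_simps)
    then show ?thesis
      using \<open>0 < dist x y\<close> by simp
  qed (use l_nonneg in simp)
  have "f x - f y \<le> (l x - lam * f x) * dist x y" for y
    using assms(1) unfolding T_subsol_def by (simp add: algebra_simps)
  then have "gslope (\<lambda>z. ereal (f z)) x \<le> ereal (l x - lam * f x)"
    using lam_f by (intro gslope_real_le) auto
  then have "ereal (lam * f x) + gslope (\<lambda>z. ereal (f z)) x \<le> ereal (lam * f x) + ereal (l x - lam * f x)"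
    by (rule add_left_mono)
  then show ?thesis
    by simp
qed

lemma T_subsol_of_slope_le:
  assumes "\<And>x. ereal lam * ereal (f x) + gslope (\<lambda>z. ereal (f z)) x \<le> ereal (l x)"
  shows "T_subsol f"
  unfolding T_subsol_def
proof safe
  fix x y
  show "f x * (1 + lam * dist x y) \<le> f y + l x * dist x y"
  proof (cases "y = x")
    case False
    have "ereal (lam * f x) + ereal ((f x - f y) / dist x y) \<le>
        ereal (lam * f x) + gslope (\<lambda>z. ereal (f z)) x"
      by (rule add_left_mono[OF gslope_real_ge[OF False]])
    also have "\<dots> \<le> ereal (l x)"
      using assms[of x] by simp
    finally have "(f x - f y) / dist x y \<le> l x - lam * f x"
      by simp
    then have "f x - f y \<le> (l x - lam * f x) * dist x y"
      using False by (simp add: divide_le_eq)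
    then show ?thesis
      by (simp add: algebra_simps)
  qed simp
qed

lemma sol_real:
  assumes "sol lam l w"
  obtains f where "w = (\<lambda>z. ereal (f z))" and "\<And>z. 0 \<le> f z"
proof -
  have w_eq: "ereal lam * w z + gslope w z = ereal (l z)" and "(INF z. w z) = 0" for z
    using assms unfolding sol_def by auto
  then have w_nonneg: "0 \<le> w z" for z
    by (metis INF_lower UNIV_I)
  have "w z \<noteq> \<infinity>" for z
  proof
    assume "w z = \<infinity>"
    then have "ereal lam * w z + gslope w z = \<infinity>"
      unfolding gslope_def using lam_nonneg by (cases "lam = 0") auto
    then show False
      using w_eq[of z] by simp
  qed
  then have "w = (\<lambda>z. ereal (real_of_ereal (w z)))"
    using w_nonneg by (intro ext) (metis ereal_real' abs_ereal_ge0 ereal_infty_less_eq(2) ereal_less_eq(1))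
  moreover have "0 \<le> real_of_ereal (w z)" for z
    using w_nonneg[of z] by (simp add: real_of_ereal_pos)
  ultimately show ?thesis
    using that[of "\<lambda>z. real_of_ereal (w z)"] by blast
qed

end

locale perron_setting = slope_operator l lam
  for l :: "'a::metric_space \<Rightarrow> real" and lam :: real +
  fixes D :: real
  assumes bounded_space: "bounded (UNIV :: 'a set)" and lsc_l: "lsc l"
    and INF_l: "(INF x. l x) = 0" and D_eq: "D = diameter (UNIV :: 'a set)"
begin

lemma dist_le_diam: "dist (x::'a) y \<le> D"
  using diameter_bounded_bound[OF bounded_space] D_eq by auto

lemma diam_nonneg: "0 \<le> D"
  using dist_le_diam[of undefined undefined] by simp

lemma l_small: "0 < e \<Longrightarrow> \<exists>x. l x < e"
proof -
  assume "0 < e"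
  have "bdd_below (range l)"
    using l_nonneg by (intro bdd_belowI[of _ 0]) auto
  then show ?thesis
    using INF_l \<open>0 < e\<close> cINF_less_iff[of UNIV l e] by auto
qed

lemma diam_pos: "0 < l x \<Longrightarrow> 0 < D"
  using l_small[of "l x"] dist_le_diam[of x] by (metis dist_pos_lt less_irrefl order_less_le_trans)

lemma INF_v: "(INF z. ereal (l z * D)) = 0"
proof (rule ereal_INF_eq_0I)
  fix e :: real assume "0 < e"
  show "\<exists>z. l z * D < e"
  proof (cases "D = 0")
    case False
    then obtain z where "l z < e / D"
      using l_small[of "e / D"] \<open>0 < e\<close> diam_nonneg by auto
    then show ?thesis
      using False diam_nonneg by (auto simp: pos_less_divide_eq)
  qed (use \<open>0 < e\<close> in simp)
qed (use l_nonneg diam_nonneg in simp)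

lemma supersol_v: "supersol lam l (\<lambda>z. ereal (l z * D))"
  unfolding supersol_def
proof (intro conjI allI)
  show "lsc (\<lambda>z. ereal (l z * D))"
  proof (rule lsc_ereal)
    fix c
    show "open {z. c < l z * D}"
    proof (cases "D = 0")
      case False
      then have "{z. c < l z * D} = {z. c / D < l z}"
        using diam_nonneg by (auto simp: divide_less_eq)
      then show ?thesis
        using lsc_l unfolding lsc_def by simp
    qed simp
  qed
  show "(INF z. ereal (l z * D)) = 0"
    by (rule INF_v)
  fix x
  have "ereal (l x) \<le> gslope (\<lambda>z. ereal (l z * D)) x"
  proof (rule le_gslope_real)
    fix g :: real
    assume "0 \<le> g" and slope: "\<And>y. l x * D - l y * D \<le> g * dist x y"
    have "l x - g \<le> l y" for y
    proof (cases "l y < l x")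
      case True
      then have "0 < D"
        using diam_pos[of x] l_nonneg[of y] by simp
      have "(l x - l y) * D \<le> g * D"
        using slope[of y] mult_left_mono[OF dist_le_diam[of x y] \<open>0 \<le> g\<close>] by (simp add: algebra_simps)
      then show ?thesis
        using \<open>0 < D\<close> by simp
    qed (use \<open>0 \<le> g\<close> in simp)
    then have "l x - g \<le> (INF y. l y)"
      by (intro cINF_greatest) auto
    then show "l x \<le> g"
      using INF_l by simp
  qed
  moreover have "0 \<le> ereal lam * ereal (l x * D)"
    using lam_nonneg l_nonneg[of x] diam_nonneg by simp
  ultimately show "ereal (l x) \<le> ereal lam * ereal (l x * D) + gslope (\<lambda>z. ereal (l z * D)) x"
    by (simp add: add_increasing)
qed

definition T_iter :: "nat \<Rightarrow> 'a \<Rightarrow> real" where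
  "T_iter n = (T_real ^^ n) (\<lambda>z. l z * D)"

definition T_lim :: "'a \<Rightarrow> real" where
  "T_lim z = (INF n. T_iter n z)"

lemma T_iter_Suc: "T_iter (Suc n) = T_real (T_iter n)"
  by (simp add: T_iter_def)

lemma T_iter_nonneg: "0 \<le> T_iter n z"
proof (induction n arbitrary: z)
  case 0
  then show ?case
    using l_nonneg diam_nonneg by (simp add: T_iter_def)
next
  case (Suc n)
  then show ?case
    unfolding T_iter_Suc by (rule T_real_nonneg)
qed

lemma Top_iter: "(Top lam l ^^ n) (\<lambda>z. ereal (l z * D)) = (\<lambda>z. ereal (T_iter n z))"
  by (induction n) (simp_all add: T_iter_def Top_ereal[OF T_iter_nonneg, unfolded T_iter_def])

lemma Top_inf_eq_T_lim: "Top_inf lam l (\<lambda>z. ereal (l z * D)) = (\<lambda>z. ereal (T_lim z))"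
proof
  fix z
  have "decseq (\<lambda>n. T_iter n z)"
    using T_real_le_self[OF T_iter_nonneg] by (intro decseq_SucI) (simp add: T_iter_Suc)
  moreover have "bdd_below (range (\<lambda>n. T_iter n z))"
    using T_iter_nonneg by (intro bdd_belowI[of _ 0]) auto
  ultimately have "(\<lambda>n. ereal (T_iter n z)) \<longlonglongrightarrow> ereal (T_lim z)"
    unfolding T_lim_def using LIMSEQ_decseq_INF tendsto_ereal by blast
  then show "Top_inf lam l (\<lambda>z. ereal (l z * D)) z = ereal (T_lim z)"
    unfolding Top_inf_def Top_iter by (rule limI)
qed

lemma T_lim_le_T_iter: "T_lim z \<le> T_iter n z"
  unfolding T_lim_def using T_iter_nonneg by (intro cINF_lower bdd_belowI[of _ 0]) auto

lemma T_lim_nonneg: "0 \<le> T_lim z"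
  unfolding T_lim_def using T_iter_nonneg by (intro cINF_greatest) auto

lemma T_lim_le_v: "T_lim z \<le> l z * D"
  using T_lim_le_T_iter[of z 0] by (simp add: T_iter_def)

lemma INF_T_lim: "(INF z. ereal (T_lim z)) = 0"
proof (rule antisym)
  show "(INF z. ereal (T_lim z)) \<le> 0"
    using INF_v T_lim_le_v by (metis INF_mono' ereal_less_eq(3))
qed (use T_lim_nonneg in \<open>auto intro: INF_greatest\<close>)

lemma T_subsol_T_lim: "T_subsol T_lim"
  unfolding T_subsol_def
proof safe
  fix x y
  have "T_lim x * (1 + lam * dist x y) - l x * dist x y \<le> T_iter n y" for n
  proof -
    have "T_lim x \<le> T_real (T_iter n) x"
      using T_lim_le_T_iter[of x "Suc n"] by (simp add: T_iter_Suc)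
    also have "\<dots> \<le> (T_iter n y + l x * dist x y) / (1 + lam * dist x y)"
      by (rule T_real_lower[OF T_iter_nonneg])
    finally show ?thesis
      using denom_pos[of x y] by (simp add: pos_le_divide_eq)
  qed
  then have "T_lim x * (1 + lam * dist x y) - l x * dist x y \<le> T_lim y"
    unfolding T_lim_def[of y] by (intro cINF_greatest) auto
  then show "T_lim x * (1 + lam * dist x y) \<le> T_lim y + l x * dist x y"
    by simp
qed

lemma T_lim_greatest:
  assumes "\<And>z. 0 \<le> w z" and "T_subsol w" and "\<And>z. w z \<le> l z * D"
  shows "w z \<le> T_lim z"
proof -
  have "w z \<le> T_iter n z" for n
  proof (induction n arbitrary: z)
    case 0
    then show ?case
      using assms(3) by (simp add: T_iter_def)
  next
    case (Suc n)
    have "w z \<le> T_real w z"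
      by (rule T_subsol_le_T_real[OF assms(2)])
    also have "\<dots> \<le> T_real (T_iter n) z"
      by (rule T_real_mono[OF assms(1) Suc.IH])
    finally show ?case
      by (simp add: T_iter_Suc)
  qed
  then show ?thesis
    unfolding T_lim_def by (intro cINF_greatest) auto
qed

lemma T_subsol_le_v:
  assumes "T_subsol w" and "\<And>z. 0 \<le> w z" and "(INF z. ereal (w z)) = 0"
  shows "w x \<le> l x * D"
proof (rule le_of_ereal_INF_eq_0[OF assms(3)])
  fix y
  have "l x * dist x y \<le> l x * D"
    using l_nonneg[of x] dist_le_diam[of x y] by (simp add: mult_left_mono)
  then show "w x \<le> w y + l x * D"
    using T_subsol_lower[OF assms(1,2), of x y] by simp
qed

lemma T_lim_le_slope_mul_diam:
  assumes "0 \<le> g" and "\<And>y. T_lim x - T_lim y \<le> g * dist x y"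
  shows "T_lim x \<le> g * D"
proof (rule le_of_ereal_INF_eq_0[OF INF_T_lim])
  fix y
  show "T_lim x \<le> T_lim y + g * D"
    using assms(2)[of y] mult_left_mono[OF dist_le_diam[of x y] assms(1)] by simp
qed

lemma T_lim_no_cone_above:
  assumes "0 \<le> k" and "0 < \<delta>"
    and cone: "\<And>z. T_lim z < T_lim x + \<delta> - k * dist x z \<Longrightarrow>
      lam * (T_lim x + \<delta> - k * dist x z) + k \<le> l z \<and> T_lim x + \<delta> - k * dist x z \<le> l z * D"
  shows False
proof -
  define w where "w z = max (T_lim z) (T_lim x + \<delta> - k * dist x z)" for z
  have "T_subsol w"
    unfolding w_def using cone by (intro T_subsol_sup_cone[OF T_subsol_T_lim \<open>0 \<le> k\<close>]) blast
  moreover have "w z \<le> l z * D" for z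
    unfolding w_def using cone[of z] T_lim_le_v[of z] by (cases "T_lim z < T_lim x + \<delta> - k * dist x z") auto
  moreover have "0 \<le> w z" for z
    unfolding w_def using T_lim_nonneg[of z] by simp
  ultimately have "w x \<le> T_lim x"
    using T_lim_greatest by blast
  then show False
    using \<open>0 < \<delta>\<close> unfolding w_def by simp
qed

lemma T_lim_slope_ge:
  assumes "0 \<le> g" and slope: "\<And>y. T_lim x - T_lim y \<le> g * dist x y"
  shows "l x - lam * T_lim x \<le> g"
proof (rule ccontr)
  assume "\<not> l x - lam * T_lim x \<le> g"
  define a where "a = l x - lam * T_lim x - g"
  have "0 < a" and "g + a \<le> l x"
    using \<open>\<not> l x - lam * T_lim x \<le> g\<close> lam_nonneg T_lim_nonneg[of x] unfolding a_def by auto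
  then have "0 < D"
    using diam_pos[of x] \<open>0 \<le> g\<close> by simp
  have "open {z. l x - a/4 < l z}"
    using lsc_l unfolding lsc_def by simp
  then obtain r where "0 < r" and l_near: "\<And>z. dist z x < r \<Longrightarrow> l x - a/4 < l z"
    unfolding open_dist using \<open>0 < a\<close> by force
  define \<delta> where "\<delta> = min (a / (4 * (lam + 1))) (min (3 * a * D / 4) (a * r / 2))"
  have "0 < \<delta>"
    unfolding \<delta>_def using \<open>0 < a\<close> \<open>0 < D\<close> \<open>0 < r\<close> lam_nonneg by auto
  have "\<delta> \<le> a / (4 * (lam + 1))"
    unfolding \<delta>_def by (rule min.cobounded1)
  then have "\<delta> * (4 * (lam + 1)) \<le> a"
    using lam_nonneg by (simp add: le_divide_eq)
  then have "lam * \<delta> \<le> a/4"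
    using \<open>0 < \<delta>\<close> by (simp add: algebra_simps)
  have "\<delta> \<le> 3 * a * D / 4" and "\<delta> \<le> a * r / 2"
    unfolding \<delta>_def by (meson min.cobounded1 min.cobounded2 order_trans)+
  text \<open>The cone of slope \<open>k\<close> raised by \<open>\<delta>\<close> stays below \<open>T_lim\<close> outside the ball of radius
    \<open>r\<close>, since \<open>T_lim\<close> decreases with slope at most \<open>g < k\<close>; inside the ball \<open>l\<close> is almost \<open>l x\<close>.\<close>
  define k where "k = g + a/2"
  show False
  proof (rule T_lim_no_cone_above)
    show "0 \<le> k"
      unfolding k_def using \<open>0 \<le> g\<close> \<open>0 < a\<close> by simp
    fix z
    let ?\<phi> = "T_lim x + \<delta> - k * dist x z"
    assume "T_lim z < ?\<phi>"
    have "dist x z < r"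
    proof (rule ccontr)
      assume "\<not> dist x z < r"
      then have "a / 2 * r \<le> a / 2 * dist x z"
        using \<open>0 < a\<close> by (intro mult_left_mono) auto
      then show False
        using \<open>T_lim z < ?\<phi>\<close> slope[of z] \<open>\<delta> \<le> a * r / 2\<close> unfolding k_def by (simp add: algebra_simps)
    qed
    then have "l x - a/4 < l z"
      by (intro l_near) (simp add: dist_commute)
    have "?\<phi> \<le> T_lim x + \<delta>"
      unfolding k_def using \<open>0 \<le> g\<close> \<open>0 < a\<close> by simp
    then have "lam * ?\<phi> \<le> lam * T_lim x + a/4"
      using mult_left_mono[OF _ lam_nonneg] \<open>lam * \<delta> \<le> a/4\<close> by (fastforce simp: algebra_simps)
    then have "lam * ?\<phi> + k \<le> l z"
      using \<open>l x - a/4 < l z\<close> a_def k_def by linarith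
    moreover have "?\<phi> \<le> (g + 3 * a / 4) * D"
      using \<open>?\<phi> \<le> T_lim x + \<delta>\<close> T_lim_le_slope_mul_diam[OF \<open>0 \<le> g\<close> slope] \<open>\<delta> \<le> 3 * a * D / 4\<close>
      by (simp add: algebra_simps)
    moreover have "(g + 3 * a / 4) * D \<le> l z * D"
      using \<open>l x - a/4 < l z\<close> \<open>g + a \<le> l x\<close> \<open>0 < D\<close> by (intro mult_right_mono) auto
    ultimately show "lam * ?\<phi> + k \<le> l z \<and> ?\<phi> \<le> l z * D"
      by simp
  qed (rule \<open>0 < \<delta>\<close>)
qed

lemma sol_T_lim: "sol lam l (\<lambda>z. ereal (T_lim z))"
  unfolding sol_def
proof (intro conjI allI)
  show "lsc (\<lambda>z. ereal (T_lim z))"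
    by (rule lsc_T_subsol[OF T_subsol_T_lim T_lim_nonneg])
  show "(INF z. ereal (T_lim z)) = 0"
    by (rule INF_T_lim)
  fix x
  show "ereal lam * ereal (T_lim x) + gslope (\<lambda>z. ereal (T_lim z)) x = ereal (l x)"
  proof (rule antisym)
    show "ereal lam * ereal (T_lim x) + gslope (\<lambda>z. ereal (T_lim z)) x \<le> ereal (l x)"
      by (rule T_subsol_slope_le[OF T_subsol_T_lim T_lim_nonneg INF_T_lim])
    have "ereal (l x - lam * T_lim x) \<le> gslope (\<lambda>z. ereal (T_lim z)) x"
      by (rule le_gslope_real) (rule T_lim_slope_ge)
    then show "ereal (l x) \<le> ereal lam * ereal (T_lim x) + gslope (\<lambda>z. ereal (T_lim z)) x"
      by (cases "gslope (\<lambda>z. ereal (T_lim z)) x") (simp_all add: algebra_simps)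
  qed
qed

lemma sol_le_T_lim:
  assumes "sol lam l w"
  shows "w x \<le> ereal (T_lim x)"
proof -
  obtain f where w_eq: "w = (\<lambda>z. ereal (f z))" and f_nonneg: "\<And>z. 0 \<le> f z"
    using sol_real[OF assms] by blast
  have "T_subsol f"
    using assms unfolding w_eq sol_def by (intro T_subsol_of_slope_le) simp
  moreover have "(INF z. ereal (f z)) = 0"
    using assms unfolding w_eq sol_def by simp
  ultimately have "f z \<le> l z * D" for z
    using T_subsol_le_v f_nonneg by blast
  then have "f x \<le> T_lim x"
    using T_lim_greatest[OF f_nonneg \<open>T_subsol f\<close>] by blast
  then show ?thesis
    unfolding w_eq by simp
qed

end

theorem proposition5p2:
  fixes l :: "'a::metric_space \<Rightarrow> real" and lam :: real
  assumes "bounded (UNIV :: 'a set)"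
    and "lam \<ge> 0"
    and "\<And>x. l x \<ge> 0"
    and "lsc l"
    and "(INF x. l x) = 0"
  shows "supersol lam l (\<lambda>x. ereal (l x * diameter (UNIV :: 'a set)))
    \<and> perron_sol lam l (Top_inf lam l (\<lambda>x. ereal (l x * diameter (UNIV :: 'a set))))"
proof -
  interpret perron_setting l lam "diameter (UNIV :: 'a set)"
    using assms by unfold_locales auto
  show ?thesis
    unfolding Top_inf_eq_T_lim perron_sol_def
    using supersol_v sol_T_lim sol_le_T_lim by blast
qed

end
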